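(* Let $Q$ be an admissible orientation of $\tilde{A}_n$ and $I$ a two-sided algebra ideal of $\Bbbk Q$. Then exactly one of the following holds: (a) $I$ is a linearized semigroup ideal; (b) $k=1$ and $I=\Bbbk(\omega+a\upsilon)$, where $\omega$ and $\upsilon$ are the two different maximal paths of $Q$ and $a\in\Bbbk\setminus\{0\}$.
   Context: $\Bbbk$ is an algebraically closed field. An admissible orientation of $\tilde A_n$ is a finite quiver $Q$ with $n$ vertices whose underlying undirected graph is a cycle, having no oriented cycle and at least one source; $k\ge1$ denotes the number of sources (= number of sinks). Paths include trivial paths $\varepsilon_x$; products of paths in $\Bbbk Q$ are concatenations when defined and $0$ otherwise. $\omega\le_J\upsilon$ means $\upsilon=\alpha\omega\beta$ for paths $\alpha,\beta$; maximal paths are the $\le_J$-maximal paths. A linearized semigroup ideal is an ideal of $\Bbbk Q$ spanned by a set $X$ of paths such that $\alpha\omega\beta\in X$ whenever $\omega\in X$ and $\alpha\omega\beta$ is a defined path. *)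

theory Defs
  imports "HOL-Computational_Algebra.Polynomial"
begin

definition alg_closed_field :: "'k::field itself \<Rightarrow> bool" where
  "alg_closed_field _ \<longleftrightarrow> (\<forall>p :: 'k poly. degree p > 0 \<longrightarrow> (\<exists>x. poly p x = 0))"

text \<open>A quiver: vertex set V, arrow set E, source map s, target map t.
  A path is a pair (x, es): start vertex x and a list of composable arrows
  (es = [] gives the trivial path at x).\<close>

definition is_path :: "'v set \<Rightarrow> 'e set \<Rightarrow> ('e \<Rightarrow> 'v) \<Rightarrow> ('e \<Rightarrow> 'v) \<Rightarrow> 'v \<times> 'e list \<Rightarrow> bool" where
  "is_path V E s t p \<longleftrightarrow> fst p \<in> V \<and> set (snd p) \<subseteq> E \<and>
     (snd p \<noteq> [] \<longrightarrow> s (hd (snd p)) = fst p) \<and>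
     (\<forall>i. Suc i < length (snd p) \<longrightarrow> t (snd p ! i) = s (snd p ! Suc i))"

definition pstart :: "'v \<times> 'e list \<Rightarrow> 'v" where
  "pstart p = fst p"

definition pend :: "('e \<Rightarrow> 'v) \<Rightarrow> 'v \<times> 'e list \<Rightarrow> 'v" where
  "pend t p = (if snd p = [] then fst p else t (last (snd p)))"

text \<open>Concatenation (first p, then q); only meaningful when pend p = pstart q.\<close>
definition pcat :: "'v \<times> 'e list \<Rightarrow> 'v \<times> 'e list \<Rightarrow> 'v \<times> 'e list" where
  "pcat p q = (fst p, snd p @ snd q)"

definition source_vertex :: "'v set \<Rightarrow> 'e set \<Rightarrow> ('e \<Rightarrow> 'v) \<Rightarrow> ('e \<Rightarrow> 'v) \<Rightarrow> 'v \<Rightarrow> bool" where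
  "source_vertex V E s t x \<longleftrightarrow> x \<in> V \<and> (\<forall>e\<in>E. t e \<noteq> x)"

definition num_sources :: "'v set \<Rightarrow> 'e set \<Rightarrow> ('e \<Rightarrow> 'v) \<Rightarrow> ('e \<Rightarrow> 'v) \<Rightarrow> nat" where
  "num_sources V E s t = card {x. source_vertex V E s t x}"

definition underlying_cycle :: "'v set \<Rightarrow> 'e set \<Rightarrow> ('e \<Rightarrow> 'v) \<Rightarrow> ('e \<Rightarrow> 'v) \<Rightarrow> nat \<Rightarrow> bool" where
  "underlying_cycle V E s t n \<longleftrightarrow> finite V \<and> card V = n \<and>
     (\<exists>vv :: nat \<Rightarrow> 'v. \<exists>aa :: nat \<Rightarrow> 'e. bij_betw vv {..<n} V \<and> bij_betw aa {..<n} E \<and>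
        (\<forall>i<n. {s (aa i), t (aa i)} = {vv i, vv (Suc i mod n)}))"

definition no_oriented_cycle :: "'v set \<Rightarrow> 'e set \<Rightarrow> ('e \<Rightarrow> 'v) \<Rightarrow> ('e \<Rightarrow> 'v) \<Rightarrow> bool" where
  "no_oriented_cycle V E s t \<longleftrightarrow>
     (\<forall>p. is_path V E s t p \<and> snd p \<noteq> [] \<longrightarrow> pend t p \<noteq> pstart p)"

definition admissible_orientation :: "'v set \<Rightarrow> 'e set \<Rightarrow> ('e \<Rightarrow> 'v) \<Rightarrow> ('e \<Rightarrow> 'v) \<Rightarrow> nat \<Rightarrow> bool" where
  "admissible_orientation V E s t n \<longleftrightarrow> underlying_cycle V E s t n \<and>
     no_oriented_cycle V E s t \<and> (\<exists>x. source_vertex V E s t x)"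

definition path_alg :: "'v set \<Rightarrow> 'e set \<Rightarrow> ('e \<Rightarrow> 'v) \<Rightarrow> ('e \<Rightarrow> 'v) \<Rightarrow> ('v \<times> 'e list \<Rightarrow> 'k::field) set" where
  "path_alg V E s t = {f. finite {p. f p \<noteq> 0} \<and> (\<forall>p. f p \<noteq> 0 \<longrightarrow> is_path V E s t p)}"

definition path_mult :: "'v set \<Rightarrow> 'e set \<Rightarrow> ('e \<Rightarrow> 'v) \<Rightarrow> ('e \<Rightarrow> 'v) \<Rightarrow>
    ('v \<times> 'e list \<Rightarrow> 'k::field) \<Rightarrow> ('v \<times> 'e list \<Rightarrow> 'k) \<Rightarrow> ('v \<times> 'e list \<Rightarrow> 'k)" where
  "path_mult V E s t f g = (\<lambda>r. if is_path V E s t r then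
      (\<Sum>i\<le>length (snd r). f (fst r, take i (snd r)) * g (pend t (fst r, take i (snd r)), drop i (snd r)))
    else 0)"

definition basis_elem :: "'v \<times> 'e list \<Rightarrow> ('v \<times> 'e list \<Rightarrow> 'k::field)" where
  "basis_elem p = (\<lambda>r. if r = p then 1 else 0)"

definition two_sided_ideal :: "'v set \<Rightarrow> 'e set \<Rightarrow> ('e \<Rightarrow> 'v) \<Rightarrow> ('e \<Rightarrow> 'v) \<Rightarrow> ('v \<times> 'e list \<Rightarrow> 'k::field) set \<Rightarrow> bool" where
  "two_sided_ideal V E s t I \<longleftrightarrow> I \<subseteq> path_alg V E s t \<and> (\<lambda>_. 0) \<in> I \<and>
     (\<forall>f\<in>I. \<forall>g\<in>I. (\<lambda>r. f r + g r) \<in> I) \<and>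
     (\<forall>c. \<forall>f\<in>I. (\<lambda>r. c * f r) \<in> I) \<and>
     (\<forall>a\<in>path_alg V E s t. \<forall>f\<in>I. path_mult V E s t a f \<in> I \<and> path_mult V E s t f a \<in> I)"

definition le_J :: "'v set \<Rightarrow> 'e set \<Rightarrow> ('e \<Rightarrow> 'v) \<Rightarrow> ('e \<Rightarrow> 'v) \<Rightarrow> 'v \<times> 'e list \<Rightarrow> 'v \<times> 'e list \<Rightarrow> bool" where
  "le_J V E s t w u \<longleftrightarrow> (\<exists>\<alpha> \<beta>. is_path V E s t \<alpha> \<and> is_path V E s t \<beta> \<and>
      pend t \<alpha> = pstart w \<and> pend t w = pstart \<beta> \<and> u = pcat (pcat \<alpha> w) \<beta>)"

definition maximal_path :: "'v set \<Rightarrow> 'e set \<Rightarrow> ('e \<Rightarrow> 'v) \<Rightarrow> ('e \<Rightarrow> 'v) \<Rightarrow> 'v \<times> 'e list \<Rightarrow> bool" where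
  "maximal_path V E s t w \<longleftrightarrow> is_path V E s t w \<and>
     (\<forall>u. is_path V E s t u \<and> le_J V E s t w u \<longrightarrow> u = w)"

definition linearized_semigroup_ideal :: "'v set \<Rightarrow> 'e set \<Rightarrow> ('e \<Rightarrow> 'v) \<Rightarrow> ('e \<Rightarrow> 'v) \<Rightarrow> ('v \<times> 'e list \<Rightarrow> 'k::field) set \<Rightarrow> bool" where
  "linearized_semigroup_ideal V E s t I \<longleftrightarrow> (\<exists>X. (\<forall>p\<in>X. is_path V E s t p) \<and>
     (\<forall>w\<in>X. \<forall>\<alpha> \<beta>. is_path V E s t \<alpha> \<and> is_path V E s t \<beta> \<and>
         pend t \<alpha> = pstart w \<and> pend t w = pstart \<beta> \<longrightarrow> pcat (pcat \<alpha> w) \<beta> \<in> X) \<and>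
     I = {f \<in> path_alg V E s t. \<forall>r. f r \<noteq> 0 \<longrightarrow> r \<in> X})"

end

theory Submission
  imports Defs
begin

text \<open>In an acyclic orientation of a cycle every vertex has at most two incident arrows, so a path
  is determined by its start and its first arrow, and also by its last arrow. Two distinct parallel
  paths therefore leave their common start by different arrows and enter their common end by
  different arrows; by connectedness they cover the whole quiver, so the start is the only source,
  the end the only sink, and these two paths are the only maximal paths, every path lying below one
  of them. Multiplying an element of an ideal by trivial paths on both sides isolates its
  coefficients on the paths between two fixed vertices; if only one path joins them, that path lies
  in the ideal. Hence either the ideal is spanned by the paths it contains, which form a semigroup
  ideal, or it contains an element whose support meets a path outside the ideal. In the latter case
  that path has a parallel partner, no path at all lies in the ideal, and the ideal is the line
  spanned by \<open>\<omega> + a\<upsilon>\<close> for the two maximal paths \<open>\<omega>, \<upsilon>\<close>.\<close>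

locale cycle_quiver =
  fixes V :: "'v set" and E :: "'e set" and s t :: "'e \<Rightarrow> 'v"
  assumes source_in_V: "e \<in> E \<Longrightarrow> s e \<in> V"
    and target_in_V: "e \<in> E \<Longrightarrow> t e \<in> V"
    and no_loop: "e \<in> E \<Longrightarrow> s e \<noteq> t e"
    and at_most_two_incident: "v \<in> V \<Longrightarrow> e1 \<in> E \<Longrightarrow> e2 \<in> E \<Longrightarrow> e3 \<in> E \<Longrightarrow>
       v \<in> {s e1, t e1} \<Longrightarrow> v \<in> {s e2, t e2} \<Longrightarrow> v \<in> {s e3, t e3} \<Longrightarrow>
       e1 = e2 \<or> e1 = e3 \<or> e2 = e3"
    and connected: "S \<subseteq> V \<Longrightarrow> S \<noteq> {} \<Longrightarrow> (\<forall>e\<in>E. s e \<in> S \<longleftrightarrow> t e \<in> S) \<Longrightarrow> S = V"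
    and acyclic: "is_path V E s t (x, es) \<Longrightarrow> es \<noteq> [] \<Longrightarrow> pend t (x, es) \<noteq> x"
begin

abbreviation "path \<equiv> is_path V E s t"
abbreviation "path_le \<equiv> le_J V E s t"

lemma incident_eq_either:
  assumes "v \<in> V" "e1 \<in> E" "e2 \<in> E" "e \<in> E" "e1 \<noteq> e2"
    "v \<in> {s e1, t e1}" "v \<in> {s e2, t e2}" "v \<in> {s e, t e}"
  shows "e = e1 \<or> e = e2"
  using at_most_two_incident[OF assms(1-4) assms(6-8)] assms(5) by auto

lemma path_Nil: "path (x, []) \<longleftrightarrow> x \<in> V"
  by (simp add: is_path_def)

lemma path_Cons: "path (x, e # es) \<longleftrightarrow> e \<in> E \<and> s e = x \<and> path (t e, es)"
proof
  assume p: "path (x, e # es)"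
  have "\<forall>i. Suc i < length es \<longrightarrow> t (es ! i) = s (es ! Suc i)"
    using p unfolding is_path_def by (metis Suc_less_eq length_Cons nth_Cons_Suc snd_conv)
  moreover have "es \<noteq> [] \<longrightarrow> s (hd es) = t e"
    using p unfolding is_path_def by (metis hd_conv_nth length_Cons length_greater_0_conv
        nth_Cons_0 nth_Cons_Suc snd_conv Suc_less_eq)
  ultimately show "e \<in> E \<and> s e = x \<and> path (t e, es)"
    using p target_in_V by (auto simp: is_path_def)
next
  assume p: "e \<in> E \<and> s e = x \<and> path (t e, es)"
  have "t ((e # es) ! i) = s ((e # es) ! Suc i)" if "Suc i < length (e # es)" for i
    using p that by (cases i) (auto simp: is_path_def hd_conv_nth)
  then show "path (x, e # es)"
    using p source_in_V by (auto simp: is_path_def)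
qed

lemma pend_Nil: "pend t (x, []) = x"
  by (simp add: pend_def)

lemma pend_Cons: "pend t (x, e # es) = pend t (t e, es)"
  by (simp add: pend_def)

lemma pend_append: "pend t (x, es @ fs) = pend t (pend t (x, es), fs)"
  by (auto simp: pend_def)

lemma path_start_in_V: "path (x, es) \<Longrightarrow> x \<in> V"
  by (simp add: is_path_def)

lemma path_append: "path (x, es @ fs) \<longleftrightarrow> path (x, es) \<and> path (pend t (x, es), fs)"
proof (induction es arbitrary: x)
  case Nil
  then show ?case by (auto simp: pend_Nil path_Nil dest: path_start_in_V)
qed (auto simp: path_Cons pend_Cons)

lemma path_snoc: "path (x, es @ [e]) \<longleftrightarrow> path (x, es) \<and> e \<in> E \<and> s e = pend t (x, es)"
  by (auto simp: path_append path_Cons path_Nil target_in_V)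

lemma pend_snoc: "pend t (x, es @ [e]) = t e"
  by (simp add: pend_def)

lemma path_pend_in_V: "path (x, es) \<Longrightarrow> pend t (x, es) \<in> V"
  using path_append[of x es "[]"] by (simp add: path_Nil)

lemma path_set_subset: "path (x, es) \<Longrightarrow> set es \<subseteq> E"
  by (simp add: is_path_def)

lemma path_extension_same_end:
  assumes "path (x, a @ c)" "pend t (x, a @ c) = pend t (x, a)"
  shows "c = []"
  using acyclic[of "pend t (x, a)" c] assms by (auto simp: path_append pend_append)

lemma path_same_start_after_prefix:
  assumes "path (x, c @ a)" "path (x, a)" "a \<noteq> []"
  shows "c = []"
proof -
  obtain e a' where a: "a = e # a'" using assms(3) by (cases a) auto
  have "pend t (x, c) = x"
    using assms(1,2) by (simp add: a path_append path_Cons)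
  then show ?thesis
    using acyclic[of x c] assms(1) by (auto simp: path_append)
qed

lemma path_prefix_of_same_first_arrow:
  assumes "path (x, e # a)" "path (x, e # b)" "length a \<le> length b"
  shows "b = a @ drop (length a) b"
  using assms
proof (induction a arbitrary: x e b)
  case (Cons e' a)
  then obtain e'' b' where b: "b = e'' # b'" by (cases b) auto
  have p: "e \<in> E" "e' \<in> E" "e'' \<in> E" "s e' = t e" "s e'' = t e"
    "path (t e, e' # a)" "path (t e, e'' # b')"
    using Cons.prems by (auto simp: b path_Cons)
  have "e' \<noteq> e" using p no_loop by auto
  then have "e'' = e \<or> e'' = e'"
    by (intro incident_eq_either[OF target_in_V[OF p(1)] p(1) p(2) p(3)]) (use p(4,5) in auto)
  then have "e'' = e'" using p no_loop by auto
  then show ?case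
    using Cons.IH[of "t e" e' b'] p(6,7) Cons.prems(3) b by auto
qed simp

lemma path_suffix_of_same_last_arrow:
  assumes "path (x, a @ [e])" "path (y, b @ [e])" "length a \<le> length b"
  shows "b = take (length b - length a) b @ a"
  using assms
proof (induction a arbitrary: x y e b rule: rev_induct)
  case (snoc e' a)
  then obtain e'' b' where b: "b = b' @ [e'']" by (cases b rule: rev_cases) auto
  have pa: "path (x, a @ [e'])" "e \<in> E" "t e' = s e"
    using snoc.prems(1) path_snoc[of x "a @ [e']" e] pend_snoc by auto
  have pb: "path (y, b' @ [e''])" "t e'' = s e"
    using snoc.prems(2) path_snoc[of y "b' @ [e'']" e] pend_snoc by (auto simp: b)
  have p: "e \<in> E" "e' \<in> E" "e'' \<in> E" "t e' = s e" "t e'' = s e"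
    "path (x, a @ [e'])" "path (y, b' @ [e''])"
    using pa pb by (auto simp: path_snoc)
  have "e' \<noteq> e" using p no_loop by force
  then have "e'' = e \<or> e'' = e'"
    by (intro incident_eq_either[OF source_in_V[OF p(1)] p(1) p(2) p(3)]) (use p(4,5) in auto)
  then have "e'' = e'" using p no_loop by force
  then show ?case
    using snoc.IH[OF p(6), of y b'] p(7) snoc.prems(3) b by auto
qed simp

lemma parallel_paths_same_first_arrow_eq:
  assumes "path (x, e # c)" "path (x, e # d)" "pend t (x, e # c) = pend t (x, e # d)"
  shows "c = d"
proof -
  have "c = d" if "path (x, e # c)" "path (x, e # d)" "pend t (x, e # c) = pend t (x, e # d)"
    "length c \<le> length d" for c d
  proof -
    have d: "d = c @ drop (length c) d"
      using path_prefix_of_same_first_arrow[OF that(1,2,4)] .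
    then have "path (x, (e # c) @ drop (length c) d)"
      and "pend t (x, (e # c) @ drop (length c) d) = pend t (x, e # c)"
      using that(2,3) by (metis append_Cons)+
    then have "drop (length c) d = []" by (rule path_extension_same_end)
    then show "c = d" using d by simp
  qed
  then show ?thesis using assms by (metis nat_le_linear)
qed

lemma parallel_paths_same_last_arrow_eq:
  assumes "path (x, c @ [e])" "path (x, d @ [e])"
  shows "c = d"
proof -
  have "c = d" if "path (x, c @ [e])" "path (x, d @ [e])" "length c \<le> length d" for c d
  proof -
    have d: "d = take (length d - length c) d @ c"
      using path_suffix_of_same_last_arrow[OF that] .
    then have "path (x, take (length d - length c) d @ c @ [e])"
      using that(2) by (metis append_assoc)
    then have "take (length d - length c) d = []"
      by (rule path_same_start_after_prefix) (use that(1) in simp_all)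
    then show "c = d" using d by (metis append.left_neutral)
  qed
  then show ?thesis using assms by (metis nat_le_linear)
qed

lemma le_J_subpath:
  assumes "path (x, p @ c @ q)"
  shows "path_le (pend t (x, p), c) (x, p @ c @ q)"
  unfolding le_J_def
proof (intro exI conjI)
  show "path (x, p)" using assms by (simp add: path_append)
  show "path (pend t (x, p @ c), q)" using assms path_append[of x "p @ c" q] by simp
  show "pend t (x, p) = pstart (pend t (x, p), c)" by (simp add: pstart_def)
  show "pend t (pend t (x, p), c) = pstart (pend t (x, p @ c), q)" by (simp add: pstart_def pend_append)
  show "(x, p @ c @ q) = pcat (pcat (x, p) (pend t (x, p), c)) (pend t (x, p @ c), q)"
    by (simp add: pcat_def)
qed

lemma le_JE:
  assumes "path_le (z, c) u"
  obtains x p q where "u = (x, p @ c @ q)" "path (x, p)" "pend t (x, p) = z" "path (pend t (z, c), q)"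
proof -
  obtain \<alpha> \<beta> where "path \<alpha>" "path \<beta>" "pend t \<alpha> = z" "pend t (z, c) = fst \<beta>"
    "u = pcat (pcat \<alpha> (z, c)) \<beta>"
    using assms by (auto simp: le_J_def pstart_def)
  then show ?thesis
    using that[of "fst \<alpha>" "snd \<alpha>" "snd \<beta>"] by (auto simp: pcat_def)
qed

lemma le_J_same_ends_eq:
  assumes "path u" "path_le w u" "fst w = fst u" "pend t w = pend t u"
  shows "w = u"
proof -
  obtain z c where w: "w = (z, c)" by fastforce
  obtain x p q where u: "u = (x, p @ c @ q)" and p: "path (x, p)" "pend t (x, p) = z"
    and q: "path (pend t (z, c), q)"
    using assms(2) w by (auto elim: le_JE)
  have "p = []" using acyclic[OF p(1)] p(2) assms(3) w u by auto
  then have "z = x" using p(2) by (simp add: pend_Nil)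
  have "pend t (pend t (z, c), q) = pend t (z, c)"
    using assms(4) w u \<open>p = []\<close> \<open>z = x\<close> by (simp add: pend_append)
  then have "q = []" using acyclic[OF q] by blast
  then show ?thesis using w u \<open>p = []\<close> \<open>z = x\<close> by simp
qed

lemma maximal_path_if_source_to_sink:
  assumes "path w" "\<forall>e\<in>E. t e \<noteq> fst w" "\<forall>e\<in>E. s e \<noteq> pend t w"
  shows "maximal_path V E s t w"
  unfolding maximal_path_def
proof (intro conjI allI impI)
  fix u assume "path u \<and> path_le w u"
  moreover obtain z c where w: "w = (z, c)" by fastforce
  ultimately obtain x p q where u: "u = (x, p @ c @ q)" and p: "path (x, p)" "pend t (x, p) = z"
    and q: "path (pend t (z, c), q)"
    by (auto elim: le_JE)
  have "p = []"
  proof (rule ccontr)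
    assume "p \<noteq> []"
    then have "last p \<in> E" "t (last p) = z"
      using p path_set_subset[OF p(1)] by (auto simp: pend_def)
    then show False using assms(2) w by auto
  qed
  moreover have "q = []"
  proof (rule ccontr)
    assume "q \<noteq> []"
    then obtain e q' where "q = e # q'" by (cases q) auto
    then have "e \<in> E" "s e = pend t (z, c)" using q by (auto simp: path_Cons)
    then show False using assms(3) w by auto
  qed
  ultimately show "u = w" using u w p(2) by (simp add: pend_Nil)
qed (use assms in simp)

lemma le_J_vertex_on_path:
  assumes "path (x, a)" "e \<in> set a" "v \<in> {s e, t e}"
  shows "path_le (v, []) (x, a)"
proof -
  obtain a1 a2 where a: "a = a1 @ e # a2" using split_list[OF assms(2)] by blast
  have "s e = pend t (x, a1)" using assms(1) by (simp add: a path_append path_Cons)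
  moreover have "path_le (pend t (x, a1), []) (x, a1 @ [] @ e # a2)"
    by (rule le_J_subpath) (use assms(1) a in simp)
  moreover have "path_le (pend t (x, a1 @ [e]), []) (x, (a1 @ [e]) @ [] @ a2)"
    by (rule le_J_subpath) (use assms(1) a in simp)
  ultimately show ?thesis using assms(3) a by (auto simp: pend_snoc)
qed

lemma le_J_path_to_sink:
  assumes path_a: "path (x, a)" and sink: "\<forall>e'\<in>E. s e' \<noteq> pend t (x, a)"
    and path_c: "path (z, e # c)" and "e \<in> set a"
  shows "path_le (z, e # c) (x, a)"
proof -
  obtain a1 a2 where a: "a = a1 @ e # a2" using split_list[OF \<open>e \<in> set a\<close>] by blast
  have z: "pend t (x, a1) = z" and path_a2: "path (z, e # a2)"
    using path_a path_c by (auto simp: a path_append path_Cons)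
  show ?thesis
  proof (cases "length c \<le> length a2")
    case True
    then have "a2 = c @ drop (length c) a2"
      using path_prefix_of_same_first_arrow[OF path_c path_a2] by simp
    then have "a = a1 @ (e # c) @ drop (length c) a2" using a by simp
    then show ?thesis using le_J_subpath[of x a1 "e # c"] path_a z by metis
  next
    case False
    then obtain e' d where c: "c = a2 @ e' # d"
      using path_prefix_of_same_first_arrow[OF path_a2 path_c]
      by (cases "drop (length a2) c") auto
    have "path (z, (e # a2) @ e' # d)" using path_c c by simp
    then have "e' \<in> E" "s e' = pend t (z, e # a2)" by (auto simp: path_append path_Cons pend_Cons)
    moreover have "pend t (z, e # a2) = pend t (x, a)" using z by (simp add: a pend_append)
    ultimately show ?thesis using sink by auto
  qed
qed

lemma vertex_on_path_cases:
  assumes "path (x, a)" "e \<in> set a" "v \<in> {s e, t e}"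
  shows "v = x \<or> v = pend t (x, a) \<or> (\<exists>e1\<in>set a. \<exists>e2\<in>set a. t e1 = v \<and> s e2 = v)"
proof -
  obtain a1 a2 where a: "a = a1 @ e # a2" using split_list[OF assms(2)] by blast
  have p: "path (pend t (x, a1), e # a2)" using assms(1) by (simp add: a path_append)
  consider "v = s e" | "v = t e" using assms(3) by auto
  then show ?thesis
  proof cases
    case 1
    show ?thesis
    proof (cases a1 rule: rev_cases)
      case Nil then show ?thesis using 1 p by (simp add: pend_Nil path_Cons)
    next
      case (snoc a0 e1) then show ?thesis using 1 p a by (auto simp: pend_snoc path_Cons)
    qed
  next
    case 2
    show ?thesis
    proof (cases a2)
      case Nil then show ?thesis using 2 a by (simp add: pend_snoc)
    next
      case (Cons e2 a3) then show ?thesis using 2 p a by (auto simp: path_Cons)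
    qed
  qed
qed

lemma vertex_incident_to_arrow:
  assumes "E \<noteq> {}" "v \<in> V"
  shows "\<exists>e\<in>E. v \<in> {s e, t e}"
proof -
  have "{v. \<exists>e\<in>E. v \<in> {s e, t e}} = V"
  proof (rule connected)
    show "{v. \<exists>e\<in>E. v \<in> {s e, t e}} \<subseteq> V" using source_in_V target_in_V by auto
    show "{v. \<exists>e\<in>E. v \<in> {s e, t e}} \<noteq> {}" using assms(1) by auto
  qed blast
  then show ?thesis using assms(2) by blast
qed

lemma arrows_eq_if_closed_under_adjacency:
  assumes "F \<subseteq> E" "F \<noteq> {}"
    and closed: "\<And>e e' v. e \<in> E \<Longrightarrow> e' \<in> F \<Longrightarrow> v \<in> {s e, t e} \<Longrightarrow> v \<in> {s e', t e'} \<Longrightarrow> e \<in> F"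
  shows "F = E"
proof -
  define S where "S = {v. \<exists>e'\<in>F. v \<in> {s e', t e'}}"
  have endpoint_in_S: "e \<in> E \<Longrightarrow> v \<in> {s e, t e} \<Longrightarrow> v \<in> S \<Longrightarrow> e \<in> F" for e v
    using closed by (auto simp: S_def)
  have "S = V"
  proof (rule connected)
    show "S \<subseteq> V" using assms(1) source_in_V target_in_V by (auto simp: S_def)
    show "S \<noteq> {}" using assms(2) by (auto simp: S_def)
    show "\<forall>e\<in>E. s e \<in> S \<longleftrightarrow> t e \<in> S"
      using endpoint_in_S by (auto simp: S_def)
  qed
  then show ?thesis
    using assms(1) endpoint_in_S source_in_V by blast
qed

context
  fixes x :: 'v and a b :: "'e list"
  assumes path_a: "path (x, a)" and path_b: "path (x, b)"
    and a_neq_b: "a \<noteq> b" and same_end: "pend t (x, a) = pend t (x, b)"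
begin

lemma parallel_nonempty: "a \<noteq> []" "b \<noteq> []"
  using acyclic[OF path_a] acyclic[OF path_b] a_neq_b same_end
  by (metis pend_Nil)+

lemma parallel_first_arrows_differ: "hd a \<noteq> hd b"
proof
  assume "hd a = hd b"
  then obtain e a' b' where "a = e # a'" "b = e # b'"
    using parallel_nonempty by (metis list.collapse)
  then show False
    using parallel_paths_same_first_arrow_eq path_a path_b a_neq_b same_end by blast
qed

lemma parallel_last_arrows_differ: "last a \<noteq> last b"
proof
  assume "last a = last b"
  then obtain e a' b' where "a = a' @ [e]" "b = b' @ [e]"
    using parallel_nonempty by (metis append_butlast_last_id)
  then show False
    using parallel_paths_same_last_arrow_eq path_a path_b a_neq_b by blast
qed

lemma parallel_first_arrows: "hd a \<in> E" "s (hd a) = x" "hd b \<in> E" "s (hd b) = x"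
  using path_a path_b parallel_nonempty by (auto simp: path_Cons neq_Nil_conv)

lemma parallel_last_arrows:
  "last a \<in> E" "t (last a) = pend t (x, a)" "last b \<in> E" "t (last b) = pend t (x, a)"
  using path_set_subset[OF path_a] path_set_subset[OF path_b] parallel_nonempty same_end
  by (auto simp: pend_def)

lemma parallel_incident_start: "e \<in> E \<Longrightarrow> x \<in> {s e, t e} \<Longrightarrow> e = hd a \<or> e = hd b"
  using incident_eq_either[OF path_start_in_V[OF path_a] parallel_first_arrows(1,3) _
      parallel_first_arrows_differ] parallel_first_arrows(2,4) by auto

lemma parallel_incident_end:
  "e \<in> E \<Longrightarrow> pend t (x, a) \<in> {s e, t e} \<Longrightarrow> e = last a \<or> e = last b"
  using incident_eq_either[OF path_pend_in_V[OF path_a] parallel_last_arrows(1,3) _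
      parallel_last_arrows_differ] parallel_last_arrows(2,4) by auto

lemma parallel_start_is_source: "e \<in> E \<Longrightarrow> t e \<noteq> x"
  using parallel_incident_start parallel_first_arrows no_loop by fastforce

lemma parallel_end_is_sink: "e \<in> E \<Longrightarrow> s e \<noteq> pend t (x, a)"
  using parallel_incident_end parallel_last_arrows no_loop by fastforce

text \<open>Every vertex met by one of the two paths is its start, its end, or an interior vertex
  whose two incident arrows both lie on that path; so arrows adjacent to the two paths lie on them.\<close>
lemma parallel_arrows: "E = set a \<union> set b"
proof (rule arrows_eq_if_closed_under_adjacency[symmetric])
  show "set a \<union> set b \<subseteq> E" using path_set_subset path_a path_b by blast
  show "set a \<union> set b \<noteq> {}" using parallel_nonempty by simp
next
  fix e e' v
  assume e: "e \<in> E" and e': "e' \<in> set a \<union> set b" and v: "v \<in> {s e, t e}" "v \<in> {s e', t e'}"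
  obtain c where c: "c = a \<or> c = b" "e' \<in> set c" using e' by blast
  have path_c: "path (x, c)" and end_c: "pend t (x, c) = pend t (x, a)"
    using c(1) path_a path_b same_end by auto
  have "v = x \<or> v = pend t (x, a) \<or> (\<exists>e1\<in>set c. \<exists>e2\<in>set c. t e1 = v \<and> s e2 = v)"
    using vertex_on_path_cases[OF path_c c(2) v(2)] end_c by simp
  then show "e \<in> set a \<union> set b"
  proof (elim disjE bexE conjE)
    assume "v = x"
    then show ?thesis using parallel_incident_start[OF e] v(1) parallel_nonempty by auto
  next
    assume "v = pend t (x, a)"
    then show ?thesis using parallel_incident_end[OF e] v(1) parallel_nonempty by auto
  next
    fix e1 e2 assume e12: "e1 \<in> set c" "e2 \<in> set c" "t e1 = v" "s e2 = v"
    have E12: "e1 \<in> E" "e2 \<in> E" using e12 path_set_subset[OF path_c] by auto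
    have "e1 \<noteq> e2" using e12 no_loop[OF E12(1)] by auto
    then have "e = e1 \<or> e = e2"
      by (intro incident_eq_either[OF target_in_V[OF E12(1)] E12 e]) (use e12 v(1) in auto)
    then show ?thesis using e12 c(1) by auto
  qed
qed

lemma parallel_sources: "{z. source_vertex V E s t z} = {x}"
proof (intro set_eqI iffI)
  fix z assume "z \<in> {z. source_vertex V E s t z}"
  then have z: "z \<in> V" "\<forall>e\<in>E. t e \<noteq> z" by (auto simp: source_vertex_def)
  obtain e where e: "e \<in> E" "z \<in> {s e, t e}"
    using vertex_incident_to_arrow[OF _ z(1)] parallel_first_arrows by blast
  obtain c where c: "c = a \<or> c = b" "e \<in> set c" using e parallel_arrows by blast
  have path_c: "path (x, c)" and end_c: "pend t (x, c) = pend t (x, a)"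
    using c(1) path_a path_b same_end by auto
  have "z = x \<or> z = pend t (x, a) \<or> (\<exists>e1\<in>set c. \<exists>e2\<in>set c. t e1 = z \<and> s e2 = z)"
    using vertex_on_path_cases[OF path_c c(2) e(2)] end_c by simp
  then show "z \<in> {x}"
    using z(2) parallel_last_arrows(1,2) path_set_subset[OF path_c] by auto
next
  fix z assume "z \<in> {x}"
  then show "z \<in> {z. source_vertex V E s t z}"
    using path_start_in_V[OF path_a] parallel_start_is_source by (auto simp: source_vertex_def)
qed

lemma parallel_num_sources: "num_sources V E s t = 1"
  by (simp add: num_sources_def parallel_sources)

lemma parallel_below: "path q \<Longrightarrow> path_le q (x, a) \<or> path_le q (x, b)"
proof (cases q)
  case (Pair z c)
  assume path_q: "path q"
  show ?thesis
  proof (cases c)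
    case Nil
    obtain e where "e \<in> E" "z \<in> {s e, t e}"
      using vertex_incident_to_arrow path_q Pair Nil parallel_first_arrows path_Nil by blast
    then show ?thesis
      using le_J_vertex_on_path[OF path_a] le_J_vertex_on_path[OF path_b] parallel_arrows Pair Nil
      by blast
  next
    case (Cons e c')
    then have "e \<in> set a \<union> set b"
      using path_q Pair by (simp add: path_Cons parallel_arrows[symmetric])
    then show ?thesis
      using le_J_path_to_sink[OF path_a] le_J_path_to_sink[OF path_b] parallel_end_is_sink
        same_end path_q Pair Cons by auto
  qed
qed

lemma parallel_maximal_paths: "{p. maximal_path V E s t p} = {(x, a), (x, b)}"
proof (intro set_eqI iffI)
  fix p assume "p \<in> {p. maximal_path V E s t p}"
  then have "path p" "\<And>u. path u \<Longrightarrow> path_le p u \<Longrightarrow> u = p"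
    by (auto simp: maximal_path_def)
  then show "p \<in> {(x, a), (x, b)}"
    using parallel_below path_a path_b by blast
next
  fix p assume "p \<in> {(x, a), (x, b)}"
  then show "p \<in> {p. maximal_path V E s t p}"
    using maximal_path_if_source_to_sink path_a path_b parallel_start_is_source
      parallel_end_is_sink same_end by auto
qed

lemma parallel_paths_only_two:
  assumes "path q" "fst q = x" "pend t q = pend t (x, a)"
  shows "q = (x, a) \<or> q = (x, b)"
  using parallel_below[OF assms(1)]
proof
  assume "path_le q (x, a)"
  then show ?thesis using le_J_same_ends_eq[OF path_a] assms(2,3) by simp
next
  assume "path_le q (x, b)"
  then show ?thesis using le_J_same_ends_eq[OF path_b] assms(2,3) same_end by simp
qed

end

lemma basis_in_path_alg: "path p \<Longrightarrow> (basis_elem p :: _ \<Rightarrow> 'k::field) \<in> path_alg V E s t"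
proof -
  assume "path p"
  moreover have "{r. basis_elem p r \<noteq> (0 :: 'k)} = {p}" by (auto simp: basis_elem_def)
  ultimately show "(basis_elem p :: _ \<Rightarrow> 'k) \<in> path_alg V E s t"
    by (auto simp: path_alg_def basis_elem_def)
qed

lemma path_alg_support_path: "f \<in> path_alg V E s t \<Longrightarrow> f r \<noteq> 0 \<Longrightarrow> path r"
  unfolding path_alg_def by blast

lemma path_alg_eq_sum_basis:
  assumes "f \<in> path_alg V E s t"
  shows "f = (\<lambda>r. \<Sum>p\<in>{p. f p \<noteq> 0}. f p * basis_elem p r)"
proof
  fix r
  have "finite {p. f p \<noteq> 0}" using assms by (simp add: path_alg_def)
  then have "(\<Sum>p\<in>{p. f p \<noteq> 0}. f p * basis_elem p r) = (\<Sum>p\<in>{p. f p \<noteq> 0}. if p = r then f r else 0)"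
    by (intro sum.cong) (auto simp: basis_elem_def)
  also have "\<dots> = f r" using \<open>finite {p. f p \<noteq> 0}\<close> by simp
  finally show "f r = (\<Sum>p\<in>{p. f p \<noteq> 0}. f p * basis_elem p r)" by simp
qed

lemma pcat_path: "path \<alpha> \<Longrightarrow> path w \<Longrightarrow> pend t \<alpha> = fst w \<Longrightarrow> path (pcat \<alpha> w)"
  by (cases \<alpha>, cases w) (auto simp: pcat_def path_append)

lemma pend_pcat: "pend t \<alpha> = fst w \<Longrightarrow> pend t (pcat \<alpha> w) = pend t w"
  by (cases \<alpha>, cases w) (simp add: pcat_def pend_append)

lemma basis_mult_basis:
  assumes "path \<alpha>" "path w" "pend t \<alpha> = fst w"
  shows "path_mult V E s t (basis_elem \<alpha>) (basis_elem w) = (basis_elem (pcat \<alpha> w) :: _ \<Rightarrow> 'k::field)"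
proof
  fix r
  show "path_mult V E s t (basis_elem \<alpha>) (basis_elem w) r = (basis_elem (pcat \<alpha> w) r :: 'k)"
  proof (cases "path r")
    case False
    then have "r \<noteq> pcat \<alpha> w" using pcat_path[OF assms] by auto
    then show ?thesis using False by (simp add: path_mult_def basis_elem_def)
  next
    case True
    obtain x0 es where r: "r = (x0, es)" by fastforce
    obtain xa as where \<alpha>: "\<alpha> = (xa, as)" by fastforce
    obtain xw ws where w: "w = (xw, ws)" by fastforce
    have split: "(fst r, take i (snd r)) = \<alpha> \<and> (pend t (fst r, take i (snd r)), drop i (snd r)) = w
        \<longleftrightarrow> i = length (snd \<alpha>) \<and> r = pcat \<alpha> w" if "i \<le> length (snd r)" for i
    proof
      assume "(fst r, take i (snd r)) = \<alpha> \<and> (pend t (fst r, take i (snd r)), drop i (snd r)) = w"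
      then have "as = take i es" "ws = drop i es" "x0 = xa" using r \<alpha> w by auto
      then show "i = length (snd \<alpha>) \<and> r = pcat \<alpha> w" using that r \<alpha> w by (simp add: pcat_def)
    next
      assume "i = length (snd \<alpha>) \<and> r = pcat \<alpha> w"
      then show "(fst r, take i (snd r)) = \<alpha> \<and> (pend t (fst r, take i (snd r)), drop i (snd r)) = w"
        using assms(3) r \<alpha> w by (simp add: pcat_def)
    qed
    have "path_mult V E s t (basis_elem \<alpha>) (basis_elem w) r = (\<Sum>i\<le>length (snd r).
        basis_elem \<alpha> (fst r, take i (snd r))
          * basis_elem w (pend t (fst r, take i (snd r)), drop i (snd r)))"
      using True by (simp add: path_mult_def)
    also have "\<dots> = (\<Sum>i\<le>length (snd r).
        if i = length (snd \<alpha>) \<and> r = pcat \<alpha> w then 1 else (0 :: 'k))"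
    proof (rule sum.cong[OF refl])
      fix i assume "i \<in> {..length (snd r)}"
      then show "basis_elem \<alpha> (fst r, take i (snd r))
            * basis_elem w (pend t (fst r, take i (snd r)), drop i (snd r))
          = (if i = length (snd \<alpha>) \<and> r = pcat \<alpha> w then 1 else (0 :: 'k))"
        using split[of i] by (auto simp: basis_elem_def)
    qed
    also have "\<dots> = basis_elem (pcat \<alpha> w) r"
      by (cases "r = pcat \<alpha> w") (auto simp: basis_elem_def pcat_def)
    finally show ?thesis .
  qed
qed

lemma vertex_mult_left:
  assumes "f \<in> path_alg V E s t"
  shows "path_mult V E s t (basis_elem (x, [])) f = (\<lambda>r. if fst r = x then f r else 0)"
proof
  fix r
  have "f r = 0" if "\<not> path r" using that assms path_alg_support_path by blast
  moreover have "path_mult V E s t (basis_elem (x, [])) f r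
      = (\<Sum>i\<le>length (snd r). if i = 0 \<and> fst r = x then f r else 0)" if "path r"
    using that by (cases r) (auto simp: path_mult_def basis_elem_def pend_Nil intro!: sum.cong)
  ultimately show "path_mult V E s t (basis_elem (x, [])) f r = (if fst r = x then f r else 0)"
    by (auto simp: path_mult_def)
qed

lemma vertex_mult_right:
  assumes "f \<in> path_alg V E s t"
  shows "path_mult V E s t f (basis_elem (y, [])) = (\<lambda>r. if pend t r = y then f r else 0)"
proof
  fix r
  have "f r = 0" if "\<not> path r" using that assms path_alg_support_path by blast
  moreover have "path_mult V E s t f (basis_elem (y, [])) r
      = (\<Sum>i\<le>length (snd r). if i = length (snd r) \<and> pend t r = y then f r else 0)" if "path r"
    using that by (cases r) (auto simp: path_mult_def basis_elem_def pend_def intro!: sum.cong)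
  ultimately show "path_mult V E s t f (basis_elem (y, [])) r = (if pend t r = y then f r else 0)"
    by (auto simp: path_mult_def)
qed

definition corner :: "'v \<Rightarrow> 'v \<Rightarrow> ('v \<times> 'e list \<Rightarrow> 'k::field) \<Rightarrow> 'v \<times> 'e list \<Rightarrow> 'k" where
  "corner x y f = (\<lambda>r. if fst r = x \<and> pend t r = y then f r else 0)"

lemma corner_eq_mult:
  assumes "f \<in> path_alg V E s t"
  shows "corner x y f
    = path_mult V E s t (path_mult V E s t (basis_elem (x, [])) f) (basis_elem (y, []))"
proof -
  have "path_mult V E s t (basis_elem (x, [])) f \<in> path_alg V E s t"
    using assms by (auto simp: vertex_mult_left path_alg_def elim!: finite_subset[rotated])
  then show ?thesis using assms by (auto simp: corner_def vertex_mult_left vertex_mult_right)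
qed

end

locale cycle_quiver_ideal = cycle_quiver V E s t for V :: "'v set" and E :: "'e set" and s t +
  fixes I :: "('v \<times> 'e list \<Rightarrow> 'k::field) set"
  assumes ideal: "two_sided_ideal V E s t I"
begin

lemma ideal_subset: "I \<subseteq> path_alg V E s t"
  using ideal by (simp add: two_sided_ideal_def)

lemma ideal_support_path: "f \<in> I \<Longrightarrow> f r \<noteq> 0 \<Longrightarrow> path r"
  using ideal_subset path_alg_support_path by blast

lemma ideal_smult: "f \<in> I \<Longrightarrow> (\<lambda>r. c * f r) \<in> I"
  using ideal by (simp add: two_sided_ideal_def)

lemma ideal_lincomb: "f \<in> I \<Longrightarrow> g \<in> I \<Longrightarrow> (\<lambda>r. c * f r + d * g r) \<in> I"
  using ideal ideal_smult[of f c] ideal_smult[of g d] by (simp add: two_sided_ideal_def)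

lemma ideal_mult:
  "a \<in> path_alg V E s t \<Longrightarrow> f \<in> I \<Longrightarrow> path_mult V E s t a f \<in> I"
  "a \<in> path_alg V E s t \<Longrightarrow> f \<in> I \<Longrightarrow> path_mult V E s t f a \<in> I"
  using ideal by (simp_all add: two_sided_ideal_def)

lemma ideal_sum_basis:
  "finite F \<Longrightarrow> (\<And>p. p \<in> F \<Longrightarrow> basis_elem p \<in> I) \<Longrightarrow> (\<lambda>r. \<Sum>p\<in>F. c p * basis_elem p r) \<in> I"
proof (induction F rule: finite_induct)
  case empty
  then show ?case using ideal by (simp add: two_sided_ideal_def)
next
  case (insert p F)
  then show ?case using ideal_lincomb[of "basis_elem p" _ "c p" 1] by simp
qed

lemma ideal_basis_le_J:
  assumes "basis_elem w \<in> I" "path w" "path_le w u"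
  shows "basis_elem u \<in> I"
proof -
  obtain \<alpha> \<beta> where ab: "path \<alpha>" "path \<beta>" "pend t \<alpha> = fst w" "pend t w = fst \<beta>"
    "u = pcat (pcat \<alpha> w) \<beta>"
    using assms(3) by (auto simp: le_J_def pstart_def)
  have "path_mult V E s t (basis_elem \<alpha>) (basis_elem w) \<in> I"
    by (rule ideal_mult(1)[OF basis_in_path_alg[OF ab(1)] assms(1)])
  then have "basis_elem (pcat \<alpha> w) \<in> I"
    by (simp only: basis_mult_basis[OF ab(1) assms(2) ab(3)])
  then have "path_mult V E s t (basis_elem (pcat \<alpha> w)) (basis_elem \<beta>) \<in> I"
    by (rule ideal_mult(2)[OF basis_in_path_alg[OF ab(2)]])
  moreover have "pend t (pcat \<alpha> w) = fst \<beta>" using pend_pcat[OF ab(3)] ab(4) by simp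
  then have "path_mult V E s t (basis_elem (pcat \<alpha> w)) (basis_elem \<beta>) = (basis_elem u :: _ \<Rightarrow> 'k)"
    using basis_mult_basis[OF pcat_path[OF ab(1) assms(2) ab(3)] ab(2)] ab(5) by simp
  ultimately show ?thesis by simp
qed

lemma ideal_corner:
  assumes "f \<in> I" "x \<in> V" "y \<in> V"
  shows "corner x y f \<in> I"
proof -
  have "path_mult V E s t (basis_elem (x, [])) f \<in> I"
    by (rule ideal_mult(1)[OF basis_in_path_alg assms(1)]) (simp add: path_Nil assms(2))
  then have "path_mult V E s t (path_mult V E s t (basis_elem (x, [])) f) (basis_elem (y, [])) \<in> I"
    by (rule ideal_mult(2)[OF basis_in_path_alg, rotated]) (simp add: path_Nil assms(3))
  moreover have "f \<in> path_alg V E s t" using assms(1) ideal_subset by blast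
  ultimately show ?thesis by (simp add: corner_eq_mult)
qed

lemma ideal_basis_if_no_parallel:
  assumes "f \<in> I" "f r \<noteq> 0"
    and unique: "\<And>q. path q \<Longrightarrow> fst q = fst r \<Longrightarrow> pend t q = pend t r \<Longrightarrow> q = r"
  shows "basis_elem r \<in> I"
proof -
  obtain x es where r: "r = (x, es)" by fastforce
  have "path r" using assms(1,2) ideal_support_path by blast
  then have "corner (fst r) (pend t r) f \<in> I"
    using ideal_corner[OF assms(1)] path_start_in_V path_pend_in_V r by simp
  moreover have "basis_elem r q = 1 / f r * corner (fst r) (pend t r) f q" for q
  proof (cases "q = r")
    case False
    then have "f q = 0" if "fst q = fst r" "pend t q = pend t r"
      using that unique ideal_support_path[OF assms(1)] by blast
    then show ?thesis using False by (simp add: corner_def basis_elem_def)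
  qed (use assms(2) in \<open>simp add: corner_def basis_elem_def\<close>)
  ultimately show ?thesis using ideal_smult[of _ "1 / f r"] by presburger
qed

lemma ideal_linearized_if_support_closed:
  assumes "\<And>f r. f \<in> I \<Longrightarrow> f r \<noteq> 0 \<Longrightarrow> basis_elem r \<in> I"
  shows "linearized_semigroup_ideal V E s t I"
  unfolding linearized_semigroup_ideal_def
proof (intro exI[of _ "{p. path p \<and> basis_elem p \<in> I}"] conjI ballI allI impI)
  fix w \<alpha> \<beta> assume w: "w \<in> {p. path p \<and> basis_elem p \<in> I}"
    and h: "path \<alpha> \<and> path \<beta> \<and> pend t \<alpha> = pstart w \<and> pend t w = pstart \<beta>"
  then have "path_le w (pcat (pcat \<alpha> w) \<beta>)" unfolding le_J_def by blast
  moreover have "path (pcat (pcat \<alpha> w) \<beta>)"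
    using w h pcat_path pend_pcat by (simp add: pstart_def)
  ultimately show "pcat (pcat \<alpha> w) \<beta> \<in> {p. path p \<and> basis_elem p \<in> I}"
    using w ideal_basis_le_J by blast
next
  show "I = {f \<in> path_alg V E s t. \<forall>r. f r \<noteq> 0 \<longrightarrow> r \<in> {p. path p \<and> basis_elem p \<in> I}}"
  proof (intro set_eqI iffI)
    fix f assume "f \<in> I"
    then show "f \<in> {f \<in> path_alg V E s t. \<forall>r. f r \<noteq> 0 \<longrightarrow> r \<in> {p. path p \<and> basis_elem p \<in> I}}"
      using assms ideal_subset ideal_support_path by blast
  next
    fix f :: "'v \<times> 'e list \<Rightarrow> 'k"
    assume f: "f \<in> {f \<in> path_alg V E s t. \<forall>r. f r \<noteq> 0 \<longrightarrow> r \<in> {p. path p \<and> basis_elem p \<in> I}}"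
    then have "(\<lambda>r. \<Sum>p\<in>{p. f p \<noteq> 0}. f p * basis_elem p r) \<in> I"
      by (intro ideal_sum_basis) (auto simp: path_alg_def)
    then show "f \<in> I" using path_alg_eq_sum_basis[of f] f by simp
  qed
qed (simp_all)

context
  fixes f :: "'v \<times> 'e list \<Rightarrow> 'k" and r r' :: "'v \<times> 'e list"
  assumes f_in: "f \<in> I" and f_r: "f r \<noteq> 0" and r_notin: "basis_elem r \<notin> I"
    and path_r': "path r'" and start_r': "fst r' = fst r" and end_r': "pend t r' = pend t r"
    and r'_neq: "r' \<noteq> r"
begin

lemma pair_parallel:
  "path (fst r, snd r)" "path (fst r, snd r')" "snd r \<noteq> snd r'"
  "pend t (fst r, snd r) = pend t (fst r, snd r')"
  using ideal_support_path[OF f_in f_r] path_r' start_r' end_r' r'_neq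
  by (metis prod.collapse)+

lemma pair_eq: "(fst r, snd r) = r" "(fst r, snd r') = r'"
  using start_r' by (simp_all add: prod_eq_iff)

lemma pair_only_two: "path q \<Longrightarrow> fst q = fst r \<Longrightarrow> pend t q = pend t r \<Longrightarrow> q = r \<or> q = r'"
  using parallel_paths_only_two[OF pair_parallel, of q] by (simp add: pair_eq)

lemma pair_maximal_paths: "{p. maximal_path V E s t p} = {r, r'}"
  using parallel_maximal_paths[OF pair_parallel] by (simp add: pair_eq)

lemma pair_corner: "corner (fst r) (pend t r) f = (\<lambda>q. f r * basis_elem r q + f r' * basis_elem r' q)"
proof
  fix q
  have "f q = 0" if "q \<noteq> r" "q \<noteq> r'" "fst q = fst r" "pend t q = pend t r"
    using that pair_only_two ideal_support_path[OF f_in] by blast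
  then show "corner (fst r) (pend t r) f q = f r * basis_elem r q + f r' * basis_elem r' q"
    using start_r' end_r' r'_neq by (auto simp: corner_def basis_elem_def)
qed

lemma pair_corner_in: "(\<lambda>q. f r * basis_elem r q + f r' * basis_elem r' q) \<in> I"
proof -
  have "corner (fst r) (pend t r) f \<in> I"
    using ideal_corner[OF f_in path_start_in_V path_pend_in_V, OF pair_parallel(1,1)]
    by (simp add: pair_eq)
  then show ?thesis by (simp add: pair_corner)
qed

lemma partner_coeff_nonzero: "f r' \<noteq> 0"
proof
  assume "f r' = 0"
  have "(\<lambda>q. 1 / f r * (f r * basis_elem r q + f r' * basis_elem r' q)) \<in> I"
    by (rule ideal_smult[OF pair_corner_in])
  moreover have "(\<lambda>q. 1 / f r * (f r * basis_elem r q + f r' * basis_elem r' q)) = basis_elem r"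
    using f_r \<open>f r' = 0\<close> by (simp add: fun_eq_iff)
  ultimately show False using r_notin by simp
qed

lemma partner_basis_notin: "basis_elem r' \<notin> I"
proof
  assume "basis_elem r' \<in> I"
  then have "(\<lambda>q. 1 / f r * (f r * basis_elem r q + f r' * basis_elem r' q)
      + (- (f r' / f r)) * basis_elem r' q) \<in> I"
    by (rule ideal_lincomb[OF pair_corner_in])
  moreover have "(\<lambda>q. 1 / f r * (f r * basis_elem r q + f r' * basis_elem r' q)
      + (- (f r' / f r)) * basis_elem r' q) = basis_elem r"
    using f_r by (simp add: fun_eq_iff field_simps)
  ultimately show False using r_notin by simp
qed

lemma pair_no_path_in_ideal: "path p \<Longrightarrow> basis_elem p \<notin> I"
  using parallel_below[OF pair_parallel, of p] ideal_basis_le_J[of p] r_notin partner_basis_notin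
  unfolding pair_eq by blast

lemma pair_ideal_vanishes_off: "h \<in> I \<Longrightarrow> q \<noteq> r \<Longrightarrow> q \<noteq> r' \<Longrightarrow> h q = 0"
proof (rule ccontr)
  assume h: "h \<in> I" "q \<noteq> r" "q \<noteq> r'" "h q \<noteq> 0"
  then have "path q" using ideal_support_path by blast
  obtain q' where q': "path q'" "fst q' = fst q" "pend t q' = pend t q" "q' \<noteq> q"
    using ideal_basis_if_no_parallel[OF h(1,4)] pair_no_path_in_ideal[OF \<open>path q\<close>] by blast
  have "path (fst q, snd q)" "path (fst q, snd q')" "snd q \<noteq> snd q'"
    "pend t (fst q, snd q) = pend t (fst q, snd q')"
    using \<open>path q\<close> q' by (metis prod.collapse)+
  then have "{p. maximal_path V E s t p} = {(fst q, snd q), (fst q, snd q')}"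
    by (rule parallel_maximal_paths)
  then have "q \<in> {p. maximal_path V E s t p}" by simp
  then show False using pair_maximal_paths h(2,3) by blast
qed

lemma pair_ideal_eq_line:
  "I = {(\<lambda>q. c * (basis_elem r q + (f r' / f r) * basis_elem r' q)) | c. True}"
proof (intro set_eqI iffI)
  fix h assume h: "h \<in> I"
  define d where "d = h r' - h r * f r' / f r"
  have h_eq: "h q = h r * basis_elem r q + h r' * basis_elem r' q" for q
    using pair_ideal_vanishes_off[OF h, of q] r'_neq by (auto simp: basis_elem_def)
  have cancel: "1 * h q + (- (h r / f r)) * (f r * basis_elem r q + f r' * basis_elem r' q)
      = d * basis_elem r' q" for q
  proof -
    have "h q = h r * basis_elem r q + h r' * basis_elem r' q" by (rule h_eq)
    then show ?thesis using f_r by (simp add: d_def field_simps)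
  qed
  have "(\<lambda>q. d * basis_elem r' q) \<in> I"
    using ideal_lincomb[OF h pair_corner_in, of 1 "- (h r / f r)"] by (simp only: cancel)
  have "d = 0"
  proof (rule ccontr)
    assume "d \<noteq> 0"
    have "(\<lambda>q. 1 / d * (d * basis_elem r' q)) \<in> I"
      by (rule ideal_smult) fact
    moreover have "(\<lambda>q. 1 / d * (d * basis_elem r' q)) = basis_elem r'"
      using \<open>d \<noteq> 0\<close> by (simp add: fun_eq_iff)
    ultimately show False using partner_basis_notin by simp
  qed
  then have "h r' = h r * (f r' / f r)" by (simp add: d_def)
  have "h = (\<lambda>q. h r * (basis_elem r q + (f r' / f r) * basis_elem r' q))"
  proof
    fix q
    have "h q = h r * basis_elem r q + h r' * basis_elem r' q" by (rule h_eq)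
    then show "h q = h r * (basis_elem r q + (f r' / f r) * basis_elem r' q)"
      using \<open>h r' = h r * (f r' / f r)\<close> by (simp add: algebra_simps)
  qed
  then show "h \<in> {(\<lambda>q. c * (basis_elem r q + (f r' / f r) * basis_elem r' q)) | c. True}" by blast
next
  fix h assume "h \<in> {(\<lambda>q. c * (basis_elem r q + (f r' / f r) * basis_elem r' q)) | c. True}"
  then obtain c where "h = (\<lambda>q. c * (basis_elem r q + (f r' / f r) * basis_elem r' q))" by blast
  moreover have "(\<lambda>q. c / f r * (f r * basis_elem r q + f r' * basis_elem r' q))
      = (\<lambda>q. c * (basis_elem r q + (f r' / f r) * basis_elem r' q))"
    using f_r by (simp add: fun_eq_iff field_simps)
  ultimately show "h \<in> I" using ideal_smult[OF pair_corner_in, of "c / f r"] by simp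
qed

lemma pair_line_ideal:
  "num_sources V E s t = 1 \<and> (\<exists>w u a. w \<noteq> u \<and> {p. maximal_path V E s t p} = {w, u} \<and> a \<noteq> 0 \<and>
     I = {(\<lambda>q. c * (basis_elem w q + a * basis_elem u q)) | c. True})"
proof
  show "num_sources V E s t = 1" by (rule parallel_num_sources[OF pair_parallel])
  have "f r' / f r \<noteq> 0" using f_r partner_coeff_nonzero by simp
  then show "\<exists>w u a. w \<noteq> u \<and> {p. maximal_path V E s t p} = {w, u} \<and> a \<noteq> 0 \<and>
      I = {(\<lambda>q. c * (basis_elem w q + a * basis_elem u q)) | c. True}"
    using r'_neq pair_maximal_paths pair_ideal_eq_line
    by (intro exI[of _ r] exI[of _ r'] exI[of _ "f r' / f r"]) simp
qed

end

lemma ideal_linearized_or_line: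
  "linearized_semigroup_ideal V E s t I \<or>
   num_sources V E s t = 1 \<and> (\<exists>w u a. w \<noteq> u \<and> {p. maximal_path V E s t p} = {w, u} \<and> a \<noteq> 0 \<and>
     I = {(\<lambda>q. c * (basis_elem w q + a * basis_elem u q)) | c. True})"
proof (cases "\<forall>f r. f \<in> I \<longrightarrow> f r \<noteq> 0 \<longrightarrow> basis_elem r \<in> I")
  case True
  then show ?thesis using ideal_linearized_if_support_closed by blast
next
  case False
  then obtain f r where f: "f \<in> I" "f r \<noteq> 0" "basis_elem r \<notin> I" by blast
  then obtain r' where "path r'" "fst r' = fst r" "pend t r' = pend t r" "r' \<noteq> r"
    using ideal_basis_if_no_parallel by blast
  then show ?thesis using pair_line_ideal[OF f] by blast
qed

lemma line_not_linearized:
  assumes "linearized_semigroup_ideal V E s t I" "path w" "w \<noteq> u" "a \<noteq> 0"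
  shows "I \<noteq> {(\<lambda>q. c * (basis_elem w q + a * basis_elem u q)) | c. True}"
proof
  assume line: "I = {(\<lambda>q. c * (basis_elem w q + a * basis_elem u q)) | c. True}"
  obtain X where X: "I = {f \<in> path_alg V E s t. \<forall>r. f r \<noteq> 0 \<longrightarrow> r \<in> X}"
    using assms(1) by (auto simp: linearized_semigroup_ideal_def)
  have "(\<lambda>q. 1 * (basis_elem w q + a * basis_elem u q)) \<in> I" using line by blast
  then have "(\<lambda>q. 1 * (basis_elem w q + a * basis_elem u q)) w \<noteq> 0 \<longrightarrow> w \<in> X" using X by blast
  then have "w \<in> X" using assms(3) by (simp add: basis_elem_def)
  then have "basis_elem w \<in> I" using X basis_in_path_alg[OF assms(2)] by (auto simp: basis_elem_def)
  then obtain c where c: "basis_elem w = (\<lambda>q. c * (basis_elem w q + a * basis_elem u q))"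
    using line by blast
  have "c = 1" using fun_cong[OF c, of w] assms(3) by (simp add: basis_elem_def)
  moreover have "c * a = 0" using fun_cong[OF c, of u] assms(3) by (simp add: basis_elem_def)
  ultimately show False using assms(4) by simp
qed

end

lemma Suc_mod_inj:
  fixes i j n :: nat
  assumes "i < n" "j < n" "Suc i mod n = Suc j mod n"
  shows "i = j"
  using assms by (auto simp: mod_Suc split: if_splits)

locale cycle_labelling =
  fixes V :: "'v set" and E :: "'e set" and s t :: "'e \<Rightarrow> 'v"
    and n :: nat and vv :: "nat \<Rightarrow> 'v" and aa :: "nat \<Rightarrow> 'e"
  assumes vv_bij: "bij_betw vv {..<n} V" and aa_bij: "bij_betw aa {..<n} E"
    and arrow_ends: "i < n \<Longrightarrow> {s (aa i), t (aa i)} = {vv i, vv (Suc i mod n)}"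
begin

lemma vertex_index: "v \<in> V \<Longrightarrow> \<exists>i<n. v = vv i"
  using vv_bij by (auto simp: bij_betw_def)

lemma arrow_index: "e \<in> E \<Longrightarrow> \<exists>i<n. e = aa i"
  using aa_bij by (auto simp: bij_betw_def)

lemma endpoints_in_V: "e \<in> E \<Longrightarrow> s e \<in> V \<and> t e \<in> V"
proof -
  assume "e \<in> E"
  then obtain i where "i < n" "e = aa i" using arrow_index by blast
  moreover have "vv i \<in> V" "vv (Suc i mod n) \<in> V"
    using vv_bij \<open>i < n\<close> by (auto simp: bij_betw_def)
  moreover have "s (aa i) \<in> {vv i, vv (Suc i mod n)}" "t (aa i) \<in> {vv i, vv (Suc i mod n)}"
    using arrow_ends[OF \<open>i < n\<close>] by blast+
  ultimately show ?thesis by auto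
qed

lemma incident_index:
  assumes "i < n" "j < n" "vv i \<in> {s (aa j), t (aa j)}"
  shows "i = j \<or> i = Suc j mod n"
proof -
  have "vv i = vv j \<or> vv i = vv (Suc j mod n)" using assms(3) arrow_ends[OF assms(2)] by auto
  moreover have "Suc j mod n < n" using assms(2) by simp
  ultimately show ?thesis
    using vv_bij assms(1,2) by (auto simp: bij_betw_def dest: inj_onD)
qed

lemma at_most_two_incident:
  assumes "v \<in> V" "e1 \<in> E" "e2 \<in> E" "e3 \<in> E"
    "v \<in> {s e1, t e1}" "v \<in> {s e2, t e2}" "v \<in> {s e3, t e3}"
  shows "e1 = e2 \<or> e1 = e3 \<or> e2 = e3"
proof -
  obtain i j1 j2 j3 where ij: "i < n" "v = vv i" "j1 < n" "e1 = aa j1" "j2 < n" "e2 = aa j2"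
    "j3 < n" "e3 = aa j3"
    using vertex_index arrow_index assms(1-4) by metis
  have "i = j1 \<or> i = Suc j1 mod n" using incident_index[OF ij(1,3)] assms(5) ij(2,4) by simp
  moreover have "i = j2 \<or> i = Suc j2 mod n" using incident_index[OF ij(1,5)] assms(6) ij(2,6) by simp
  moreover have "i = j3 \<or> i = Suc j3 mod n" using incident_index[OF ij(1,7)] assms(7) ij(2,8) by simp
  ultimately have "j1 = j2 \<or> j1 = j3 \<or> j2 = j3"
    using Suc_mod_inj[OF ij(3,5)] Suc_mod_inj[OF ij(3,7)] Suc_mod_inj[OF ij(5,7)] by argo
  then show ?thesis using ij by auto
qed

lemma connected:
  assumes "S \<subseteq> V" "S \<noteq> {}" "\<forall>e\<in>E. s e \<in> S \<longleftrightarrow> t e \<in> S"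
  shows "S = V"
proof
  obtain i0 where i0: "i0 < n" "vv i0 \<in> S" using assms(1,2) vertex_index by blast
  have step: "vv (Suc i mod n) \<in> S" if "i < n" "vv i \<in> S" for i
  proof -
    have "aa i \<in> E" using aa_bij that(1) by (auto simp: bij_betw_def)
    then show ?thesis using assms(3) arrow_ends[OF that(1)] that(2) by (metis doubleton_eq_iff insertI1)
  qed
  have reach: "vv ((i0 + m) mod n) \<in> S" for m
  proof (induction m)
    case 0 then show ?case using i0 by simp
  next
    case (Suc m)
    then show ?case using step[of "(i0 + m) mod n"] i0(1) by (simp add: mod_Suc_eq)
  qed
  show "V \<subseteq> S"
  proof
    fix v assume "v \<in> V"
    then obtain i where "i < n" "v = vv i" using vertex_index by blast
    moreover have "(i0 + (n - i0 + i)) mod n = i" using i0(1) \<open>i < n\<close> by simp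
    ultimately show "v \<in> S" using reach[of "n - i0 + i"] by simp
  qed
qed (use assms(1) in simp)

end

lemma admissible_orientation_cycle_quiver:
  assumes "admissible_orientation V E s t n"
  shows "cycle_quiver V E s t"
proof -
  obtain vv aa where "cycle_labelling V E s t n vv aa"
    using assms by (auto simp: admissible_orientation_def underlying_cycle_def cycle_labelling_def)
  then interpret cycle_labelling V E s t n vv aa .
  have acyclic: "is_path V E s t (x, es) \<Longrightarrow> es \<noteq> [] \<Longrightarrow> pend t (x, es) \<noteq> x" for x es
    using assms by (auto simp: admissible_orientation_def no_oriented_cycle_def pstart_def)
  have "s e \<noteq> t e" if "e \<in> E" for e
  proof -
    have "is_path V E s t (s e, [e])" using that endpoints_in_V by (auto simp: is_path_def)
    then show ?thesis using acyclic[of "s e" "[e]"] by (simp add: pend_def)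
  qed
  then show ?thesis
    using endpoints_in_V at_most_two_incident connected acyclic by unfold_locales blast+
qed

theorem proposition6:
  fixes V :: "'v set" and E :: "'e set" and s t :: "'e \<Rightarrow> 'v" and n :: nat
    and I :: "('v \<times> 'e list \<Rightarrow> 'k::field) set"
  assumes "alg_closed_field TYPE('k)"
    and "admissible_orientation V E s t n"
    and "two_sided_ideal V E s t I"
  shows "linearized_semigroup_ideal V E s t I \<longleftrightarrow>
    \<not> (num_sources V E s t = 1 \<and>
       (\<exists>w u a. w \<noteq> u \<and> {p. maximal_path V E s t p} = {w, u} \<and> a \<noteq> 0 \<and>
          I = {(\<lambda>r. c * (basis_elem w r + a * basis_elem u r)) | c. True}))"
proof -
  interpret cycle_quiver_ideal V E s t I
    using admissible_orientation_cycle_quiver[OF assms(2)] assms(3)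
    by (simp add: cycle_quiver_ideal_def cycle_quiver_ideal_axioms_def)
  have "is_path V E s t w" if "{p. maximal_path V E s t p} = {w, u}" for w u
    using that by (auto simp: maximal_path_def)
  then show ?thesis
    using ideal_linearized_or_line line_not_linearized by blast
qed

end
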